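(* Let $M=(E,\mathcal{I})$ be a matroid with rank function $r$, and let $L\in\mathbb{R}^{E\times E}$ be symmetric ($L^T=L$). Let $x\in B(M)$, and let $\{P_1,\dots,P_k\}$ be the partition of $E$ such that $(Lx)(e)=c_i$ for all $e\in P_i$, with $c_1<c_2<\dots<c_k$. Then the following are equivalent: (i) $(x,x)$ is a symmetric Nash equilibrium; (ii) all bases of $M$ have the same cost with respect to the weights $Lx$; (iii) for every base $B$ of $M$ and every $i$, $|B\cap P_i|=r(P_i)$; (iv) $x(P_i)=r(P_i)$ for all $i\in\{1,\dots,k\}$; (v) for every circuit $C$ of $M$ there exists $i$ with $C\subseteq P_i$.
   Context: $B(M)=\{x\in\mathbb{R}^E: x\ge0,\ x(S)\le r(S)\ \forall S\subseteq E,\ x(E)=r(E)\}$ is the base polytope, $x(S)=\sum_{e\in S}x(e)$. The matroid game: the row player chooses $x\in B(M)$ and wants to minimize $x^TLy$, the column player chooses $y\in B(M)$ and wants to maximize it. $(x,x)$ with $x\in B(M)$ is a symmetric Nash equilibrium if $x^TLz\le x^TLx\le z^TLx$ for all $z\in B(M)$. The cost of a base $B$ w.r.t. weights $w$ is $\sum_{e\in B}w(e)$. *)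

theory Defs
  imports Main "HOL.Real"
begin

definition matroid :: "'a set \<Rightarrow> ('a set \<Rightarrow> bool) \<Rightarrow> bool" where
  "matroid E indep \<longleftrightarrow>
     finite E \<and>
     (\<forall>I. indep I \<longrightarrow> I \<subseteq> E) \<and>
     indep {} \<and>
     (\<forall>I J. indep J \<and> I \<subseteq> J \<longrightarrow> indep I) \<and>
     (\<forall>I J. indep I \<and> indep J \<and> card I < card J \<longrightarrow>
        (\<exists>e \<in> J - I. indep (insert e I)))"

definition rank :: "('a set \<Rightarrow> bool) \<Rightarrow> 'a set \<Rightarrow> nat" where
  "rank indep S = Max {card I | I. I \<subseteq> S \<and> indep I}"

definition is_base :: "'a set \<Rightarrow> ('a set \<Rightarrow> bool) \<Rightarrow> 'a set \<Rightarrow> bool" where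
  "is_base E indep B \<longleftrightarrow> B \<subseteq> E \<and> indep B \<and> (\<forall>e \<in> E - B. \<not> indep (insert e B))"

definition is_circuit :: "'a set \<Rightarrow> ('a set \<Rightarrow> bool) \<Rightarrow> 'a set \<Rightarrow> bool" where
  "is_circuit E indep C \<longleftrightarrow> C \<subseteq> E \<and> \<not> indep C \<and> (\<forall>D. D \<subset> C \<longrightarrow> indep D)"

definition base_polytope :: "'a set \<Rightarrow> ('a set \<Rightarrow> bool) \<Rightarrow> ('a \<Rightarrow> real) set" where
  "base_polytope E indep =
     {x. (\<forall>e \<in> E. x e \<ge> 0) \<and>
         (\<forall>S \<subseteq> E. (\<Sum>e\<in>S. x e) \<le> real (rank indep S)) \<and>
         (\<Sum>e\<in>E. x e) = real (rank indep E)}"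

definition matvec :: "'a set \<Rightarrow> ('a \<Rightarrow> 'a \<Rightarrow> real) \<Rightarrow> ('a \<Rightarrow> real) \<Rightarrow> 'a \<Rightarrow> real" where
  "matvec E L x e = (\<Sum>f\<in>E. L e f * x f)"

definition bilin :: "'a set \<Rightarrow> ('a \<Rightarrow> real) \<Rightarrow> ('a \<Rightarrow> 'a \<Rightarrow> real) \<Rightarrow> ('a \<Rightarrow> real) \<Rightarrow> real" where
  "bilin E x L y = (\<Sum>e\<in>E. \<Sum>f\<in>E. x e * L e f * y f)"

definition symmetric_NE :: "'a set \<Rightarrow> ('a set \<Rightarrow> bool) \<Rightarrow> ('a \<Rightarrow> 'a \<Rightarrow> real) \<Rightarrow> ('a \<Rightarrow> real) \<Rightarrow> bool" where
  "symmetric_NE E indep L x \<longleftrightarrow> x \<in> base_polytope E indep \<and>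
     (\<forall>z \<in> base_polytope E indep. bilin E x L z \<le> bilin E x L x \<and> bilin E x L x \<le> bilin E z L x)"

definition cost :: "('a \<Rightarrow> real) \<Rightarrow> 'a set \<Rightarrow> real" where
  "cost w B = (\<Sum>e\<in>B. w e)"

definition level_classes :: "'a set \<Rightarrow> ('a \<Rightarrow> real) \<Rightarrow> 'a set set" where
  "level_classes E w = (\<lambda>c. {e \<in> E. w e = c}) ` (w ` E)"

end

theory Submission
  imports Defs "HOL-Library.Disjoint_Sets" "HOL-Library.Indicator_Function"
begin

text \<open>
  Against a fixed opponent x, a strategy z earns \<open>z\<^sup>T L x = \<Sum>\<^sub>e z(e) w(e)\<close> with
  \<open>w = Lx\<close>; as L is symmetric, both equilibrium inequalities together say that this linear
  function is constant on B(M). Evaluated at incidence vectors of bases, this makes all bases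
  equally expensive. If some base B met a level class P of w in fewer than r(P) elements,
  augmenting \<open>B \<inter> P\<close> inside P and extending it to a base would trade an element outside P
  for one in P, changing the cost. So every base meets every P in r(P) elements, i.e.
  \<open>\<Sum>\<^sub>P r(P) = r(E)\<close>; together with \<open>z(P) \<le> r(P)\<close> and \<open>z(E) = r(E)\<close> this
  forces z(P) = r(P) for every z \<in> B(M), so the payoff \<open>\<Sum>\<^sub>P c\<^sub>P z(P)\<close> does not depend
  on z. Circuit exchange shows that the same rank-additive partitions are exactly those whose
  parts contain every circuit they meet.
\<close>

lemma partition_on_level_classes: "partition_on E (level_classes E w)"
  unfolding partition_on_def level_classes_def disjoint_def by auto

lemma weighted_sum_eq_if_level_class_sums_eq:
  fixes w z y :: "'a \<Rightarrow> real"
  assumes E: "finite E" and sums: "\<forall>P\<in>level_classes E w. sum z P = sum y P"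
  shows "(\<Sum>e\<in>E. z e * w e) = (\<Sum>e\<in>E. y e * w e)"
proof -
  have classwise: "(\<Sum>e\<in>P. z e * w e) = (\<Sum>e\<in>P. y e * w e)"
    if P: "P \<in> level_classes E w" for P
  proof -
    obtain c where P_def: "P = {e \<in> E. w e = c}"
      using P unfolding level_classes_def by blast
    have "(\<Sum>e\<in>P. v e * w e) = c * sum v P" for v :: "'a \<Rightarrow> real"
      unfolding P_def sum_distrib_left by (intro sum.cong) auto
    then show ?thesis
      using sums P by simp
  qed
  have "(\<Sum>e\<in>E. z e * w e) = (\<Sum>P\<in>level_classes E w. \<Sum>e\<in>P. z e * w e)"
    by (rule sum.partition[OF E partition_on_level_classes])
  also have "\<dots> = (\<Sum>P\<in>level_classes E w. \<Sum>e\<in>P. y e * w e)"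
    using classwise by (rule sum.cong[OF refl])
  also have "\<dots> = (\<Sum>e\<in>E. y e * w e)"
    by (rule sum.partition[OF E partition_on_level_classes, symmetric])
  finally show ?thesis .
qed

lemma card_swap:
  assumes "finite B" "e \<notin> B" "f \<in> B"
  shows "card (insert e B - {f}) = card B"
proof -
  have "card (insert e B - {f}) = card (insert e (B - {f}))"
    using assms by (metis insert_Diff_if singletonD)
  also have "\<dots> = Suc (card (B - {f}))"
    using assms by (intro card_insert_disjoint) auto
  also have "\<dots> = card B"
    by (rule card_Suc_Diff1[OF assms(1,3)])
  finally show ?thesis .
qed

lemma cost_swap:
  assumes "finite B" "e \<notin> B" "f \<in> B"
  shows "cost w (insert e B - {f}) = cost w B + w e - w f"
proof -
  have "insert e B - {f} = insert e (B - {f})"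
    using assms by auto
  then show ?thesis
    using assms by (simp add: cost_def sum_diff1)
qed

lemma card_eq_sum_card_Int_parts:
  assumes A: "finite A" and part: "partition_on A \<P>" and B: "B \<subseteq> A"
  shows "card B = (\<Sum>P\<in>\<P>. card (B \<inter> P))"
proof -
  have finite_parts: "finite P" if "P \<in> \<P>" for P
    using finite_subset[OF _ A] partition_onD1[OF part] that by blast
  have "card B = (\<Sum>e\<in>A. indicator B e :: nat)"
    using sum_indicator_eq_card[OF A, of B] B by (simp add: Int_absorb1)
  also have "\<dots> = (\<Sum>P\<in>\<P>. \<Sum>e\<in>P. indicator B e :: nat)"
    by (rule sum.partition[OF A part])
  also have "\<dots> = (\<Sum>P\<in>\<P>. card (B \<inter> P))"
    using finite_parts by (intro sum.cong refl) (simp add: sum_indicator_eq_card Int_commute)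
  finally show ?thesis .
qed

locale matroid_on =
  fixes E :: "'a set" and indep :: "'a set \<Rightarrow> bool"
  assumes matroid: "matroid E indep"
begin

lemma finite_ground: "finite E"
  using matroid by (simp add: matroid_def)

lemma indep_subset_ground: "indep I \<Longrightarrow> I \<subseteq> E"
  using matroid by (simp add: matroid_def)

lemma indep_empty: "indep {}"
  using matroid by (simp add: matroid_def)

lemma indep_subset: "indep J \<Longrightarrow> I \<subseteq> J \<Longrightarrow> indep I"
  using matroid unfolding matroid_def by blast

lemma indep_augment:
  "indep I \<Longrightarrow> indep J \<Longrightarrow> card I < card J \<Longrightarrow> \<exists>e\<in>J - I. indep (insert e I)"
  using matroid unfolding matroid_def by blast

lemma indep_finite: "indep I \<Longrightarrow> finite I"
  using finite_subset[OF indep_subset_ground finite_ground] .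

lemma base_indep: "is_base E indep B \<Longrightarrow> indep B"
  and base_subset_ground: "is_base E indep B \<Longrightarrow> B \<subseteq> E"
  by (simp_all add: is_base_def)

lemma indep_extend_to_card:
  "indep I \<Longrightarrow> indep J \<Longrightarrow> card I \<le> card J \<Longrightarrow>
     \<exists>I'. indep I' \<and> I \<subseteq> I' \<and> I' \<subseteq> I \<union> J \<and> card I' = card J"
proof (induction "card J - card I" arbitrary: I)
  case 0
  then show ?case by auto
next
  case (Suc n)
  then have "card I < card J" by simp
  then obtain e where e: "e \<in> J - I" "indep (insert e I)"
    using indep_augment Suc.prems by blast
  have "card (insert e I) = Suc (card I)"
    using e indep_finite[OF \<open>indep I\<close>] by simp
  then have "n = card J - card (insert e I)" "card (insert e I) \<le> card J"
    using Suc.hyps(2) \<open>card I < card J\<close> by simp_all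
  from Suc.hyps(1)[OF this(1) e(2) Suc.prems(2) this(2)]
  obtain I' where "indep I'" "insert e I \<subseteq> I'" "I' \<subseteq> insert e I \<union> J" "card I' = card J"
    by blast
  then show ?case
    using e by (intro exI[of _ I']) auto
qed

lemma indep_card_le_base:
  assumes B: "is_base E indep B" and J: "indep J"
  shows "card J \<le> card B"
proof (rule ccontr)
  assume "\<not> ?thesis"
  then obtain e where "e \<in> J - B" "indep (insert e B)"
    using indep_augment[of B J] B J by (auto simp: is_base_def)
  then show False
    using B indep_subset_ground[OF J] by (auto simp: is_base_def)
qed

lemma finite_card_indep_subsets:
  assumes "S \<subseteq> E"
  shows "finite {card I | I. I \<subseteq> S \<and> indep I}"
proof -
  have "{card I | I. I \<subseteq> S \<and> indep I} \<subseteq> card ` Pow S"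
    by blast
  moreover have "finite S"
    using assms finite_ground by (rule finite_subset)
  ultimately show ?thesis
    by (meson finite_Pow_iff finite_imageI finite_subset)
qed

lemma rank_ge_card:
  assumes "S \<subseteq> E" "I \<subseteq> S" "indep I"
  shows "card I \<le> rank indep S"
proof -
  have "card I \<in> {card I | I. I \<subseteq> S \<and> indep I}"
    using assms by blast
  then show ?thesis
    unfolding rank_def by (rule Max_ge[OF finite_card_indep_subsets[OF assms(1)]])
qed

lemma rank_attained:
  assumes "S \<subseteq> E"
  obtains I where "I \<subseteq> S" "indep I" "card I = rank indep S"
proof -
  have "{card I | I. I \<subseteq> S \<and> indep I} \<noteq> {}"
    using indep_empty by auto
  then have "rank indep S \<in> {card I | I. I \<subseteq> S \<and> indep I}"
    unfolding rank_def by (rule Max_in[OF finite_card_indep_subsets[OF assms]])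
  then show ?thesis
    using that by auto
qed

lemma indep_card_rank_imp_base:
  assumes I: "indep I" and card_I: "card I = rank indep E"
  shows "is_base E indep I"
  unfolding is_base_def
proof (intro conjI ballI notI)
  fix e assume e: "e \<in> E - I" "indep (insert e I)"
  then have "card (insert e I) \<le> card I"
    using rank_ge_card[of E "insert e I"] card_I indep_subset_ground by auto
  then show False
    using e indep_finite[OF I] by simp
qed (use I indep_subset_ground in auto)

lemma indep_extends_to_base:
  assumes I: "indep I"
  obtains B where "is_base E indep B" "I \<subseteq> B"
proof -
  obtain J where J: "indep J" "card J = rank indep E"
    using rank_attained[of E] by blast
  have "card I \<le> card J"
    using rank_ge_card[OF order_refl indep_subset_ground[OF I] I] J(2) by simp
  then obtain B where "indep B" "I \<subseteq> B" "card B = card J"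
    using indep_extend_to_card[OF I J(1)] by blast
  then show ?thesis
    using that indep_card_rank_imp_base J(2) by metis
qed

lemma base_exists: obtains B where "is_base E indep B"
  using indep_extends_to_base[OF indep_empty] by blast

lemma card_base:
  assumes B: "is_base E indep B"
  shows "card B = rank indep E"
proof (rule antisym)
  show "card B \<le> rank indep E"
    using rank_ge_card[OF order_refl base_subset_ground[OF B] base_indep[OF B]] .
  obtain I where "indep I" "card I = rank indep E"
    using rank_attained[of E] by blast
  then show "rank indep E \<le> card B"
    using indep_card_le_base[OF B] by metis
qed

lemma indep_card_eq_base_imp_base:
  "is_base E indep B \<Longrightarrow> indep J \<Longrightarrow> card J = card B \<Longrightarrow> is_base E indep J"
  by (metis card_base indep_card_rank_imp_base)

lemma dependent_contains_circuit:
  "D \<subseteq> E \<Longrightarrow> \<not> indep D \<Longrightarrow> \<exists>C \<subseteq> D. is_circuit E indep C"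
proof (induction "card D" arbitrary: D rule: less_induct)
  case less
  show ?case
  proof (cases "\<forall>D'. D' \<subset> D \<longrightarrow> indep D'")
    case True
    then show ?thesis using less.prems unfolding is_circuit_def by blast
  next
    case False
    then obtain D' where D': "D' \<subset> D" "\<not> indep D'" by blast
    then have "card D' < card D"
      using psubset_card_mono finite_subset[OF less.prems(1) finite_ground] by blast
    then obtain C where "C \<subseteq> D'" "is_circuit E indep C"
      using less.hyps[of D'] D' less.prems by blast
    then show ?thesis
      using D' by blast
  qed
qed

lemma circuit_exchange:
  assumes C: "is_circuit E indep C" and C_sub: "C \<subseteq> insert e B" and B: "indep B" and f: "f \<in> C"
  shows "indep (insert e B - {f})"
proof (cases "f = e")
  case True
  then show ?thesis using indep_subset[OF B] by auto
next
  case False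
  have C_dep: "\<not> indep C" and C_min: "indep (C - {f})"
    using C f unfolding is_circuit_def by auto
  have e_notin: "e \<notin> B"
  proof
    assume "e \<in> B"
    then show False using C_sub C_dep indep_subset[OF B] by (simp add: insert_absorb)
  qed
  have f_in: "f \<in> B" using False f C_sub by auto
  have card_eq: "card (insert e B - {f}) = card B"
    using card_swap[OF indep_finite[OF B] e_notin f_in] .
  have "card (C - {f}) \<le> card (insert e B - {f})"
    using C_sub indep_finite[OF B] by (intro card_mono) auto
  then have "card (C - {f}) \<le> card B"
    using card_eq by simp
  then obtain I where I: "indep I" "C - {f} \<subseteq> I" "I \<subseteq> (C - {f}) \<union> B" "card I = card B"
    using indep_extend_to_card[OF C_min B] by blast
  have "f \<notin> I"
  proof
    assume "f \<in> I"
    then have "C \<subseteq> I" using I(2) by blast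
    then show False using I(1) C_dep indep_subset by blast
  qed
  then have "I \<subseteq> insert e B - {f}" using I(3) C_sub by auto
  then have "I = insert e B - {f}"
    using card_eq I(4) indep_finite[OF B] by (intro card_subset_eq) auto
  then show ?thesis using I(1) by simp
qed

lemma card_Int_le_rank: "indep I \<Longrightarrow> P \<subseteq> E \<Longrightarrow> card (I \<inter> P) \<le> rank indep P"
  using rank_ge_card indep_subset by (meson inf_le1 inf_le2)

lemma indep_Int_augment_below_rank:
  assumes I: "indep I" and P: "P \<subseteq> E" and less: "card (I \<inter> P) < rank indep P"
  obtains e where "e \<in> P" "e \<notin> I" "indep (insert e (I \<inter> P))"
proof -
  obtain J where J: "J \<subseteq> P" "indep J" "card J = rank indep P"
    using rank_attained[OF P] by blast
  have "indep (I \<inter> P)"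
    using indep_subset[OF I] by blast
  moreover have "card (I \<inter> P) < card J"
    using less J(3) by simp
  ultimately obtain e where "e \<in> J - I \<inter> P" "indep (insert e (I \<inter> P))"
    using indep_augment[OF _ J(2)] by blast
  moreover have "e \<in> P" if "e \<in> J" for e
    using J(1) that by blast
  ultimately show ?thesis
    using that by blast
qed

lemma base_exchange_avoiding:
  assumes B: "is_base E indep B" and A: "A \<subseteq> B" and e: "e \<notin> B"
    and indep_Ae: "indep (insert e A)"
  obtains f where "f \<in> B - A" "is_base E indep (insert e B - {f})"
proof -
  have finite_B: "finite B"
    using indep_finite[OF base_indep[OF B]] .
  obtain B' where B': "indep B'" "insert e A \<subseteq> B'" "B' \<subseteq> insert e A \<union> B" "card B' = card B"
    using indep_extend_to_card[OF indep_Ae base_indep[OF B]] indep_card_le_base[OF B indep_Ae]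
    by blast
  have "\<not> B \<subseteq> B'"
  proof
    assume "B \<subseteq> B'"
    then have "B = B'"
      using card_subset_eq[OF indep_finite[OF B'(1)] _ B'(4)[symmetric]] by blast
    then show False
      using B'(2) e by blast
  qed
  then obtain f where f: "f \<in> B" "f \<notin> B'"
    by blast
  have "B' \<subseteq> insert e B - {f}"
    using B'(3) f A by blast
  moreover have "card B' = card (insert e B - {f})"
    using card_swap[OF finite_B e f(1)] B'(4) by simp
  ultimately have "B' = insert e B - {f}"
    using finite_B by (intro card_subset_eq) auto
  then have "is_base E indep (insert e B - {f})"
    using indep_card_eq_base_imp_base[OF B B'(1,4)] by simp
  moreover have "f \<notin> A"
    using f(2) B'(2) by blast
  ultimately show ?thesis
    using that f(1) by blast
qed

text \<open>
  Rank additivity \<open>\<Sum>\<^sub>P r(P) = r(E)\<close> of a partition says that its parts are unions of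
  connected components of the matroid.
\<close>
lemma bases_meet_parts_in_rank_iff_rank_additive:
  assumes part: "partition_on E \<P>"
  shows "(\<forall>B P. is_base E indep B \<and> P \<in> \<P> \<longrightarrow> card (B \<inter> P) = rank indep P)
     \<longleftrightarrow> (\<Sum>P\<in>\<P>. rank indep P) = rank indep E"
proof
  assume meet: "\<forall>B P. is_base E indep B \<and> P \<in> \<P> \<longrightarrow> card (B \<inter> P) = rank indep P"
  obtain B where B: "is_base E indep B"
    by (rule base_exists)
  have "(\<Sum>P\<in>\<P>. rank indep P) = (\<Sum>P\<in>\<P>. card (B \<inter> P))"
    using meet B by simp
  also have "\<dots> = card B"
    using card_eq_sum_card_Int_parts[OF finite_ground part base_subset_ground[OF B]] by simp
  finally show "(\<Sum>P\<in>\<P>. rank indep P) = rank indep E"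
    using card_base[OF B] by simp
next
  assume additive: "(\<Sum>P\<in>\<P>. rank indep P) = rank indep E"
  show "\<forall>B P. is_base E indep B \<and> P \<in> \<P> \<longrightarrow> card (B \<inter> P) = rank indep P"
  proof (intro allI impI, elim conjE)
    fix B P assume B: "is_base E indep B" and P: "P \<in> \<P>"
    have "(\<Sum>P\<in>\<P>. card (B \<inter> P)) = (\<Sum>P\<in>\<P>. rank indep P)"
      using card_eq_sum_card_Int_parts[OF finite_ground part base_subset_ground[OF B]]
        card_base[OF B] additive by simp
    moreover have "card (B \<inter> Q) \<le> rank indep Q" if "Q \<in> \<P>" for Q
      using card_Int_le_rank[OF base_indep[OF B]] partition_onD1[OF part] that by blast
    ultimately show "card (B \<inter> P) = rank indep P"
      by (rule sum_mono_inv[OF _ _ P finite_elements[OF finite_ground part]])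
  qed
qed

lemma base_polytope_sum_eq_rank_if_rank_additive:
  assumes part: "partition_on E \<P>" and additive: "(\<Sum>P\<in>\<P>. rank indep P) = rank indep E"
    and z: "z \<in> base_polytope E indep" and P: "P \<in> \<P>"
  shows "sum z P = rank indep P"
proof -
  have "(\<Sum>Q\<in>\<P>. sum z Q) = sum z E"
    by (rule sum.partition[OF finite_ground part, symmetric])
  also have "\<dots> = (\<Sum>Q\<in>\<P>. real (rank indep Q))"
    using z additive unfolding base_polytope_def by (simp flip: of_nat_sum)
  finally have "(\<Sum>Q\<in>\<P>. sum z Q) = (\<Sum>Q\<in>\<P>. real (rank indep Q))" .
  moreover have "sum z Q \<le> rank indep Q" if "Q \<in> \<P>" for Q
    using z partition_onD1[OF part] that unfolding base_polytope_def by blast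
  ultimately show ?thesis
    by (rule sum_mono_inv[OF _ _ P finite_elements[OF finite_ground part]])
qed

lemma rank_additive_if_base_polytope_tight:
  assumes part: "partition_on E \<P>" and z: "z \<in> base_polytope E indep"
    and tight: "\<forall>P\<in>\<P>. sum z P = rank indep P"
  shows "(\<Sum>P\<in>\<P>. rank indep P) = rank indep E"
proof -
  have "real (\<Sum>P\<in>\<P>. rank indep P) = (\<Sum>P\<in>\<P>. sum z P)"
    using tight by simp
  also have "\<dots> = sum z E"
    by (rule sum.partition[OF finite_ground part, symmetric])
  also have "\<dots> = real (rank indep E)"
    using z unfolding base_polytope_def by blast
  finally show ?thesis
    by (simp only: of_nat_eq_iff)
qed

lemma base_polytope_tight_iff_rank_additive:
  assumes part: "partition_on E \<P>" and z: "z \<in> base_polytope E indep"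
  shows "(\<forall>P\<in>\<P>. sum z P = rank indep P) \<longleftrightarrow> (\<Sum>P\<in>\<P>. rank indep P) = rank indep E"
  using rank_additive_if_base_polytope_tight[OF part z]
    base_polytope_sum_eq_rank_if_rank_additive[OF part _ z] by blast

text \<open>
  If a circuit C left its part P at f, extend \<open>C - e\<close> (with e \<in> C \<inter> P) to a base B;
  exchanging f for e yields a base meeting P in one more element than B.
\<close>
lemma circuit_within_part_if_bases_meet_parts_in_rank:
  assumes part: "partition_on E \<P>"
    and meet: "\<forall>B P. is_base E indep B \<and> P \<in> \<P> \<longrightarrow> card (B \<inter> P) = rank indep P"
    and C: "is_circuit E indep C"
  shows "\<exists>P\<in>\<P>. C \<subseteq> P"
proof (rule ccontr)
  assume outside: "\<not> (\<exists>P\<in>\<P>. C \<subseteq> P)"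
  have C_dep: "\<not> indep C" and C_sub: "C \<subseteq> E"
    using C unfolding is_circuit_def by auto
  then have "C \<noteq> {}"
    using indep_empty by auto
  then obtain e where e: "e \<in> C"
    by blast
  then obtain P where P: "P \<in> \<P>" "e \<in> P"
    using C_sub partition_onD1[OF part] by blast
  then obtain f where f: "f \<in> C" "f \<notin> P"
    using outside by blast
  have "indep (C - {e})"
    using C e unfolding is_circuit_def by blast
  obtain B where B_base: "is_base E indep B" and B: "C - {e} \<subseteq> B"
    using indep_extends_to_base[OF \<open>indep (C - {e})\<close>] by blast
  have B_indep: "indep B" and finite_B: "finite B"
    using base_indep[OF B_base] indep_finite[OF base_indep[OF B_base]] by simp_all
  have e_notin: "e \<notin> B"
  proof
    assume "e \<in> B"
    then have "C \<subseteq> B" using B by blast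
    then show False using B_indep C_dep indep_subset by blast
  qed
  have f_in: "f \<in> B"
    using B e f P by blast
  have "indep (insert e B - {f})"
    using circuit_exchange[OF C _ B_indep f(1)] B by blast
  then have swap_base: "is_base E indep (insert e B - {f})"
    using indep_card_eq_base_imp_base[OF B_base] card_swap[OF finite_B e_notin f_in] by blast
  have "(insert e B - {f}) \<inter> P = insert e (B \<inter> P)"
    using P f by blast
  then have "card ((insert e B - {f}) \<inter> P) = Suc (card (B \<inter> P))"
    using e_notin finite_B by simp
  then show False
    using meet swap_base B_base P(1) by simp
qed

lemma bases_meet_parts_in_rank_if_circuits_within_parts:
  assumes part: "partition_on E \<P>"
    and within: "\<forall>C. is_circuit E indep C \<longrightarrow> (\<exists>P\<in>\<P>. C \<subseteq> P)"
    and B: "is_base E indep B" and P: "P \<in> \<P>"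
  shows "card (B \<inter> P) = rank indep P"
proof (rule ccontr)
  have P_sub: "P \<subseteq> E"
    using partition_onD1[OF part] P by blast
  assume "card (B \<inter> P) \<noteq> rank indep P"
  then have "card (B \<inter> P) < rank indep P"
    using card_Int_le_rank[OF base_indep[OF B] P_sub] by simp
  then obtain e where e_P: "e \<in> P" and e_notin: "e \<notin> B"
    and indep_e: "indep (insert e (B \<inter> P))"
    using indep_Int_augment_below_rank[OF base_indep[OF B] P_sub] by blast
  have e_E: "e \<in> E"
    using e_P P_sub by blast
  then have "\<not> indep (insert e B)"
    using B e_notin unfolding is_base_def by blast
  moreover have "insert e B \<subseteq> E"
    using base_subset_ground[OF B] e_E by blast
  ultimately obtain C where C_sub: "C \<subseteq> insert e B" and C: "is_circuit E indep C"
    using dependent_contains_circuit by blast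
  have C_dep: "\<not> indep C"
    using C unfolding is_circuit_def by blast
  then have "e \<in> C"
    using C_sub indep_subset[OF base_indep[OF B]] by blast
  obtain Q where "Q \<in> \<P>" "C \<subseteq> Q"
    using within C by blast
  then have "e \<in> Q \<inter> P"
    using \<open>e \<in> C\<close> e_P by blast
  then have "Q = P"
    using disjointD[OF partition_onD2[OF part] \<open>Q \<in> \<P>\<close> P] by blast
  then have "C \<subseteq> insert e (B \<inter> P)"
    using C_sub \<open>C \<subseteq> Q\<close> by blast
  then show False
    using C_dep indep_subset[OF indep_e] by blast
qed

lemma circuits_within_parts_iff_bases_meet_parts_in_rank:
  assumes part: "partition_on E \<P>"
  shows "(\<forall>C. is_circuit E indep C \<longrightarrow> (\<exists>P\<in>\<P>. C \<subseteq> P))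
     \<longleftrightarrow> (\<forall>B P. is_base E indep B \<and> P \<in> \<P> \<longrightarrow> card (B \<inter> P) = rank indep P)"
  using circuit_within_part_if_bases_meet_parts_in_rank[OF part]
    bases_meet_parts_in_rank_if_circuits_within_parts[OF part] by blast


lemma bases_meet_level_classes_in_rank_if_cost_constant:
  assumes const: "\<forall>B1 B2. is_base E indep B1 \<and> is_base E indep B2 \<longrightarrow> cost w B1 = cost w B2"
    and B: "is_base E indep B" and P: "P \<in> level_classes E w"
  shows "card (B \<inter> P) = rank indep P"
proof (rule ccontr)
  obtain c where P_def: "P = {e \<in> E. w e = c}"
    using P unfolding level_classes_def by blast
  have P_sub: "P \<subseteq> E"
    unfolding P_def by blast
  assume "card (B \<inter> P) \<noteq> rank indep P"
  then have "card (B \<inter> P) < rank indep P"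
    using card_Int_le_rank[OF base_indep[OF B] P_sub] by simp
  then obtain e where e_P: "e \<in> P" and e_notin: "e \<notin> B"
    and indep_e: "indep (insert e (B \<inter> P))"
    using indep_Int_augment_below_rank[OF base_indep[OF B] P_sub] by blast
  obtain f where f: "f \<in> B - B \<inter> P" and swap_base: "is_base E indep (insert e B - {f})"
    using base_exchange_avoiding[OF B _ e_notin indep_e] by blast
  have "w f \<noteq> w e"
    using f e_P base_subset_ground[OF B] unfolding P_def by blast
  have "cost w (insert e B - {f}) = cost w B + w e - w f"
    using cost_swap[OF indep_finite[OF base_indep[OF B]] e_notin] f by blast
  moreover have "cost w (insert e B - {f}) = cost w B"
    using const B swap_base by blast
  ultimately show False
    using \<open>w f \<noteq> w e\<close> by simp
qed

lemma indicator_base_in_base_polytope: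
  assumes B: "is_base E indep B"
  shows "(indicator B :: 'a \<Rightarrow> real) \<in> base_polytope E indep"
proof -
  have sum_indicator: "(\<Sum>e\<in>S. indicator B e :: real) = card (B \<inter> S)" if "S \<subseteq> E" for S
    using sum_indicator_mult[OF finite_subset[OF that finite_ground], of B "\<lambda>_. 1 :: real"]
    by (simp add: Int_commute)
  have "(\<Sum>e\<in>S. indicator B e :: real) \<le> rank indep S" if "S \<subseteq> E" for S
    using sum_indicator[OF that] card_Int_le_rank[OF base_indep[OF B] that] by simp
  moreover have "(\<Sum>e\<in>E. indicator B e :: real) = rank indep E"
    using sum_indicator[OF order_refl] card_base[OF B] base_subset_ground[OF B]
    by (simp add: Int_absorb2)
  ultimately show ?thesis
    unfolding base_polytope_def by auto
qed

lemma base_cost_eq_if_linear_constant_on_base_polytope: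
  assumes const: "\<forall>z\<in>base_polytope E indep. (\<Sum>e\<in>E. z e * w e) = c"
    and B: "is_base E indep B"
  shows "cost w B = c"
proof -
  have "cost w B = (\<Sum>e\<in>E. indicator B e * w e)"
    using finite_ground base_subset_ground[OF B] by (simp add: cost_def Int_absorb1)
  also have "\<dots> = c"
    using const indicator_base_in_base_polytope[OF B] by blast
  finally show ?thesis .
qed

lemma linear_constant_on_base_polytope_if_rank_additive:
  assumes additive: "(\<Sum>P\<in>level_classes E w. rank indep P) = rank indep E"
    and z: "z \<in> base_polytope E indep" and y: "y \<in> base_polytope E indep"
  shows "(\<Sum>e\<in>E. z e * w e) = (\<Sum>e\<in>E. y e * w e)"
proof (rule weighted_sum_eq_if_level_class_sums_eq[OF finite_ground], intro ballI)
  fix P assume P: "P \<in> level_classes E w"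
  note tight = base_polytope_sum_eq_rank_if_rank_additive[OF partition_on_level_classes additive]
  show "sum z P = sum y P"
    using tight[OF z P] tight[OF y P] by simp
qed

end

lemma bilin_eq_sum_matvec: "bilin E z L y = (\<Sum>e\<in>E. z e * matvec E L y e)"
  unfolding bilin_def matvec_def by (simp add: sum_distrib_left mult.assoc)

lemma bilin_commute:
  assumes symL: "\<forall>e \<in> E. \<forall>f \<in> E. L e f = L f e"
  shows "bilin E y L z = bilin E z L y"
  unfolding bilin_def by (subst sum.swap) (use symL in \<open>auto intro!: sum.cong simp: mult_ac\<close>)

lemma symmetric_NE_iff_payoff_constant:
  assumes symL: "\<forall>e \<in> E. \<forall>f \<in> E. L e f = L f e" and x: "x \<in> base_polytope E indep"
  shows "symmetric_NE E indep L x
     \<longleftrightarrow> (\<forall>z\<in>base_polytope E indep. bilin E z L x = bilin E x L x)"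
proof -
  have "(bilin E x L z \<le> bilin E x L x \<and> bilin E x L x \<le> bilin E z L x)
      \<longleftrightarrow> bilin E z L x = bilin E x L x" for z
    unfolding bilin_commute[OF symL, of x z] by auto
  then show ?thesis
    unfolding symmetric_NE_def using x by simp
qed

theorem theorem9:
  fixes E :: "'a set" and indep :: "'a set \<Rightarrow> bool"
    and L :: "'a \<Rightarrow> 'a \<Rightarrow> real" and x :: "'a \<Rightarrow> real"
  assumes M: "matroid E indep"
    and symL: "\<forall>e \<in> E. \<forall>f \<in> E. L e f = L f e"
    and x: "x \<in> base_polytope E indep"
  defines "w \<equiv> matvec E L x"
  shows "(symmetric_NE E indep L x
            \<longleftrightarrow> (\<forall>B1 B2. is_base E indep B1 \<and> is_base E indep B2 \<longrightarrow> cost w B1 = cost w B2))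
       \<and> ((\<forall>B1 B2. is_base E indep B1 \<and> is_base E indep B2 \<longrightarrow> cost w B1 = cost w B2)
            \<longleftrightarrow> (\<forall>B P. is_base E indep B \<and> P \<in> level_classes E w \<longrightarrow> card (B \<inter> P) = rank indep P))
       \<and> ((\<forall>B P. is_base E indep B \<and> P \<in> level_classes E w \<longrightarrow> card (B \<inter> P) = rank indep P)
            \<longleftrightarrow> (\<forall>P \<in> level_classes E w. (\<Sum>e\<in>P. x e) = real (rank indep P)))
       \<and> ((\<forall>P \<in> level_classes E w. (\<Sum>e\<in>P. x e) = real (rank indep P))
            \<longleftrightarrow> (\<forall>C. is_circuit E indep C \<longrightarrow> (\<exists>P \<in> level_classes E w. C \<subseteq> P)))"
  (is "(?NE \<longleftrightarrow> ?cost) \<and> (?cost \<longleftrightarrow> ?meet) \<and> (?meet \<longleftrightarrow> ?tight) \<and> (?tight \<longleftrightarrow> ?circuits)")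
proof -
  interpret matroid_on E indep
    by (rule matroid_on.intro[OF M])
  have part: "partition_on E (level_classes E w)"
    by (rule partition_on_level_classes)
  have NE_iff: "?NE \<longleftrightarrow> (\<forall>z\<in>base_polytope E indep. (\<Sum>e\<in>E. z e * w e) = (\<Sum>e\<in>E. x e * w e))"
    unfolding symmetric_NE_iff_payoff_constant[OF symL x] w_def bilin_eq_sum_matvec ..
  have additive_iff: "?meet \<longleftrightarrow> (\<Sum>P\<in>level_classes E w. rank indep P) = rank indep E"
    by (rule bases_meet_parts_in_rank_iff_rank_additive[OF part])
  have "?NE \<Longrightarrow> ?cost"
    using base_cost_eq_if_linear_constant_on_base_polytope unfolding NE_iff by metis
  moreover have "?cost \<Longrightarrow> ?meet"
    using bases_meet_level_classes_in_rank_if_cost_constant by blast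
  moreover have "?meet \<Longrightarrow> ?NE"
    unfolding NE_iff additive_iff using linear_constant_on_base_polytope_if_rank_additive x by blast
  moreover have "?meet \<longleftrightarrow> ?tight"
    unfolding additive_iff by (rule base_polytope_tight_iff_rank_additive[OF part x, symmetric])
  moreover have "?meet \<longleftrightarrow> ?circuits"
    by (rule circuits_within_parts_iff_bases_meet_parts_in_rank[OF part, symmetric])
  ultimately show ?thesis
    by argo
qed

end
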